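(* Let $p$ be a prime, let $G$ be a finite $p$-group and let $A$ be a non-empty normal subset of $G$ consisting of elements of order $p$. Assume that for all $a\in A$, $a$ centralizes every elementary abelian $p$-subgroup of $G$ which it normalizes. Then $\langle A\rangle$ is an elementary abelian normal subgroup of $G$.
   Context: A normal subset of $G$ is a subset closed under conjugation by elements of $G$. *)

theory Defs
  imports "HOL-Algebra.Algebra"
begin

definition p_group :: "('a, 'b) monoid_scheme \<Rightarrow> nat \<Rightarrow> bool" where
  "p_group G p \<longleftrightarrow> group G \<and> finite (carrier G) \<and> (\<exists>n. order G = p ^ n)"

definition normal_subset :: "('a, 'b) monoid_scheme \<Rightarrow> 'a set \<Rightarrow> bool" where
  "normal_subset G A \<longleftrightarrow> A \<subseteq> carrier G \<and>
     (\<forall>g\<in>carrier G. \<forall>a\<in>A. g \<otimes>\<^bsub>G\<^esub> a \<otimes>\<^bsub>G\<^esub> inv\<^bsub>G\<^esub> g \<in> A)"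

definition elem_abelian_subgroup :: "('a, 'b) monoid_scheme \<Rightarrow> nat \<Rightarrow> 'a set \<Rightarrow> bool" where
  "elem_abelian_subgroup G p E \<longleftrightarrow> subgroup E G \<and>
     (\<forall>x\<in>E. \<forall>y\<in>E. x \<otimes>\<^bsub>G\<^esub> y = y \<otimes>\<^bsub>G\<^esub> x) \<and>
     (\<forall>x\<in>E. x [^]\<^bsub>G\<^esub> p = \<one>\<^bsub>G\<^esub>)"

definition normalizes :: "('a, 'b) monoid_scheme \<Rightarrow> 'a \<Rightarrow> 'a set \<Rightarrow> bool" where
  "normalizes G a E \<longleftrightarrow> (\<lambda>x. a \<otimes>\<^bsub>G\<^esub> x \<otimes>\<^bsub>G\<^esub> inv\<^bsub>G\<^esub> a) ` E = E"

definition centralizes :: "('a, 'b) monoid_scheme \<Rightarrow> 'a \<Rightarrow> 'a set \<Rightarrow> bool" where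
  "centralizes G a E \<longleftrightarrow> (\<forall>x\<in>E. a \<otimes>\<^bsub>G\<^esub> x = x \<otimes>\<^bsub>G\<^esub> a)"

end

theory Submission
  imports Defs
begin

text \<open>
  We show by induction on \<open>|H|\<close> that any two elements \<open>a, b\<close> of \<open>A\<close> lying in a subgroup \<open>H\<close>
  commute. If \<open>\<langle>a\<rangle> = H\<close> this is clear. Otherwise \<open>\<langle>a\<rangle>\<close> lies in a proper subgroup \<open>M\<close> of the
  \<open>p\<close>-group \<open>H\<close> that is normalised by all of \<open>H\<close> (a maximal one: normalisers grow in
  \<open>p\<close>-groups, because \<open>M\<close> acting on its cosets in \<open>H\<close> has a number of fixed points
  \<open>\<equiv> |H : M| \<equiv> 0 (mod p)\<close>). By induction \<open>E = \<langle>A \<inter> M\<rangle>\<close> is elementary abelian, and \<open>b\<close>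
  normalises \<open>A \<inter> M\<close>, hence \<open>E\<close>; so by hypothesis \<open>b\<close> centralises \<open>E \<ni> a\<close>.
  For \<open>H = G\<close>, \<open>\<langle>A\<rangle>\<close> is generated by commuting elements of order \<open>p\<close>, and it is normal because
  \<open>A\<close> is a normal subset.
\<close>

definition fixed_points :: "('a, 'c) monoid_scheme \<Rightarrow> 'b set \<Rightarrow> ('a \<Rightarrow> 'b \<Rightarrow> 'b) \<Rightarrow> 'b set" where
  "fixed_points G E \<phi> = {x \<in> E. \<forall>g\<in>carrier G. \<phi> g x = x}"

lemma group_actionI:
  fixes K (structure) and act :: "'a \<Rightarrow> 'b \<Rightarrow> 'b"
  assumes "group K"
    and closed: "\<And>g x. g \<in> carrier K \<Longrightarrow> x \<in> E \<Longrightarrow> act g x \<in> E"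
    and one: "\<And>x. x \<in> E \<Longrightarrow> act \<one> x = x"
    and mult: "\<And>g h x. \<lbrakk>g \<in> carrier K; h \<in> carrier K; x \<in> E\<rbrakk> \<Longrightarrow> act (g \<otimes> h) x = act g (act h x)"
  shows "group_action K E (\<lambda>g. \<lambda>x\<in>E. act g x)"
proof -
  interpret group K by fact
  have bij: "(\<lambda>x\<in>E. act g x) \<in> Bij E" if g: "g \<in> carrier K" for g
  proof -
    have "act g (act (inv g) x) = x" "act (inv g) (act g x) = x" if "x \<in> E" for x
      using that g mult[of g "inv g" x] mult[of "inv g" g x] one by simp_all
    then have "bij_betw (act g) E E"
      using closed g by (intro bij_betwI[where g = "act (inv g)"]) auto
    then show ?thesis
      unfolding Bij_def by simp
  qed
  have "(\<lambda>g. \<lambda>x\<in>E. act g x) \<in> hom K (BijGroup E)"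
  proof (rule homI)
    show "(\<lambda>x\<in>E. act g x) \<in> carrier (BijGroup E)" if "g \<in> carrier K" for g
      using bij[OF that] by (simp add: BijGroup_def)
    show "(\<lambda>x\<in>E. act (g \<otimes> h) x) = (\<lambda>x\<in>E. act g x) \<otimes>\<^bsub>BijGroup E\<^esub> (\<lambda>x\<in>E. act h x)"
      if "g \<in> carrier K" "h \<in> carrier K" for g h
      using that bij[OF that(1)] bij[OF that(2)]
      by (simp add: BijGroup_def compose_def mult closed cong: restrict_cong)
  qed
  then show ?thesis
    unfolding group_action_def group_hom_def group_hom_axioms_def
    using \<open>group K\<close> group_BijGroup by (intro conjI)
qed

lemma (in group_action) orbit_eq_singleton_iff:
  assumes "x \<in> E"
  shows "orbit G \<phi> x = {x} \<longleftrightarrow> x \<in> fixed_points G E \<phi>"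
proof
  assume orbit: "orbit G \<phi> x = {x}"
  have "\<phi> g x \<in> orbit G \<phi> x" if "g \<in> carrier G" for g
    using that unfolding orbit_def by blast
  then show "x \<in> fixed_points G E \<phi>"
    using assms unfolding orbit fixed_points_def by simp
next
  assume "x \<in> fixed_points G E \<phi>"
  then show "orbit G \<phi> x = {x}"
    using orbit_refl[OF assms] unfolding fixed_points_def orbit_def by auto
qed

lemma (in group_action) orbit_disjoint_fixed_points:
  assumes x: "x \<in> E" "x \<notin> fixed_points G E \<phi>"
  shows "orbit G \<phi> x \<inter> fixed_points G E \<phi> = {}"
proof (rule ccontr)
  assume "orbit G \<phi> x \<inter> fixed_points G E \<phi> \<noteq> {}"
  then obtain g where g: "g \<in> carrier G" and fixed: "\<phi> g x \<in> fixed_points G E \<phi>"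
    unfolding orbit_def by blast
  have "inv\<^bsub>G\<^esub> g \<in> carrier G"
    using group.inv_closed[OF group_hom.axioms(1)[OF group_hom] g] .
  then have "\<phi> (inv\<^bsub>G\<^esub> g) (\<phi> g x) = \<phi> g x"
    using fixed unfolding fixed_points_def by blast
  then have "x = \<phi> g x"
    using orbit_sym_aux[OF g x(1) refl] by simp
  then show False
    using x(2) fixed by simp
qed

lemma (in group_action) p_dvd_card_orbit:
  assumes "order G = p ^ n" and p: "Factorial_Ring.prime p"
    and x: "x \<in> E" "x \<notin> fixed_points G E \<phi>"
  shows "p dvd card (orbit G \<phi> x)"
proof -
  have "card (orbit G \<phi> x) dvd p ^ n"
    using orbit_stabilizer_theorem[OF x(1)] assms(1) dvd_triv_left by metis
  then obtain i where i: "card (orbit G \<phi> x) = p ^ i"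
    using divides_primepow_nat[OF p] by blast
  have "i \<noteq> 0"
  proof
    assume "i = 0"
    then have "orbit G \<phi> x = {x}"
      using i orbit_refl[OF x(1)] by (auto simp: card_1_singleton_iff)
    then show False
      using orbit_eq_singleton_iff[OF x(1)] x(2) by simp
  qed
  then show ?thesis
    unfolding i by (simp add: dvd_power)
qed

lemma (in group_action) p_dvd_card_orbit_diff_fixed_points:
  assumes "order G = p ^ n" and "Factorial_Ring.prime p" and "orb \<in> orbits G E \<phi>"
  shows "p dvd card (orb - fixed_points G E \<phi>)"
proof -
  obtain x where x: "x \<in> E" and orb: "orb = orbit G \<phi> x"
    using assms(3) unfolding orbits_def by blast
  show ?thesis
  proof (cases "x \<in> fixed_points G E \<phi>")
    case True
    then have "orb - fixed_points G E \<phi> = {}"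
      using orbit_eq_singleton_iff[OF x] orb by simp
    then show ?thesis
      by (metis card.empty dvd_0_right)
  next
    case False
    then have "orb - fixed_points G E \<phi> = orb"
      using orbit_disjoint_fixed_points[OF x] orb by blast
    then show ?thesis
      using p_dvd_card_orbit[OF assms(1,2) x False] orb by simp
  qed
qed

lemma (in group_action) card_fixed_points_mod:
  assumes "order G = p ^ n" and "Factorial_Ring.prime p" and "finite E"
  shows "card (fixed_points G E \<phi>) mod p = card E mod p"
proof -
  let ?F = "fixed_points G E \<phi>"
  have "p dvd (\<Sum>orb\<in>orbits G E \<phi>. card (orb - ?F))"
    using p_dvd_card_orbit_diff_fixed_points[OF assms(1,2)] by (rule dvd_sum)
  also have "(\<Sum>orb\<in>orbits G E \<phi>. card (orb - ?F)) = card (E - ?F)"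
  proof -
    have card_eq: "card (B - ?F) = (\<Sum>x\<in>B. if x \<in> ?F then 0 else 1)" if "finite B" for B
      using that by (simp add: sum.If_cases Diff_eq)
    have "finite orb" if "orb \<in> orbits G E \<phi>" for orb
      using that orbits_coverture finite_subset[OF _ \<open>finite E\<close>] by blast
    then have "(\<Sum>orb\<in>orbits G E \<phi>. card (orb - ?F))
        = (\<Sum>orb\<in>orbits G E \<phi>. \<Sum>x\<in>orb. if x \<in> ?F then 0 else 1)"
      using card_eq by (intro sum.cong) auto
    also have "\<dots> = (\<Sum>x\<in>E. if x \<in> ?F then 0 else 1)"
      by (rule disjoint_sum[OF \<open>finite E\<close>])
    also have "\<dots> = card (E - ?F)"
      using card_eq[OF \<open>finite E\<close>] by (rule sym)
    finally show ?thesis .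
  qed
  finally obtain k where k: "card (E - ?F) = p * k"
    by (elim dvdE)
  have "?F \<subseteq> E"
    unfolding fixed_points_def by auto
  then have "card E = card ?F + p * k"
    using card_Diff_subset[of ?F E] card_mono[of E ?F] \<open>finite E\<close> finite_subset[of ?F E] k by simp
  then show ?thesis
    by simp
qed

lemma (in group) card_subgroup_prime_power:
  assumes "order G = p ^ n" and "Factorial_Ring.prime p" and "subgroup H G"
  shows "\<exists>k. card H = p ^ k"
proof -
  have "card H dvd p ^ n"
    using lagrange[OF assms(3)] assms(1) dvd_triv_right by metis
  then show ?thesis
    using divides_primepow_nat[OF assms(2)] by blast
qed

lemma (in group) rcosets_right_action:
  assumes H: "subgroup H G" and M: "subgroup M G" "M \<subseteq> H"
  shows "group_action (G\<lparr>carrier := M\<rparr>) ((\<lambda>h. M #> h) ` H)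
           (\<lambda>l. \<lambda>S\<in>(\<lambda>h. M #> h) ` H. S #> inv l)"
proof (rule group_actionI)
  have M_sub: "M \<subseteq> carrier G" and H_sub: "H \<subseteq> carrier G"
    using M(1) H subgroup.subset by auto
  have E_sub: "S \<subseteq> carrier G" if "S \<in> (\<lambda>h. M #> h) ` H" for S
    using that r_coset_subset_G[OF M_sub] H_sub by blast
  show "group (G\<lparr>carrier := M\<rparr>)"
    using subgroup_imp_group[OF M(1)] .
  show "S #> inv l \<in> (\<lambda>h. M #> h) ` H"
    if l: "l \<in> carrier (G\<lparr>carrier := M\<rparr>)" and S: "S \<in> (\<lambda>h. M #> h) ` H" for l S
  proof -
    obtain h where h: "h \<in> H" "S = M #> h"
      using S by blast
    have "l \<in> H"
      using l M(2) by auto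
    then have "h \<otimes> inv l \<in> H"
      using h(1) H by (simp add: subgroup.m_closed subgroup.m_inv_closed)
    moreover have "S #> inv l = M #> (h \<otimes> inv l)"
      unfolding h(2) using coset_mult_assoc[OF M_sub, of h "inv l"] h(1) \<open>l \<in> H\<close> H_sub by blast
    ultimately show ?thesis
      by auto
  qed
  show "S #> inv \<one>\<^bsub>G\<lparr>carrier := M\<rparr>\<^esub> = S" if "S \<in> (\<lambda>h. M #> h) ` H" for S
    using E_sub[OF that] by simp
  show "S #> inv (l \<otimes>\<^bsub>G\<lparr>carrier := M\<rparr>\<^esub> l') = S #> inv l' #> inv l"
    if "l \<in> carrier (G\<lparr>carrier := M\<rparr>)" "l' \<in> carrier (G\<lparr>carrier := M\<rparr>)" "S \<in> (\<lambda>h. M #> h) ` H"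
    for l l' S
  proof -
    have "l \<in> carrier G" "l' \<in> carrier G"
      using that(1,2) M_sub by auto
    then show ?thesis
      using coset_mult_assoc[OF E_sub[OF that(3)], of "inv l'" "inv l"] by (simp add: inv_mult_group)
  qed
qed

lemma (in group) p_dvd_card_rcosets:
  assumes p: "Factorial_Ring.prime p" and H: "subgroup H G" "card H = p ^ k"
    and M: "subgroup M G" "M \<subset> H"
  shows "p dvd card ((\<lambda>h. M #> h) ` H)"
proof -
  let ?H = "G\<lparr>carrier := H\<rparr>"
  interpret H: group ?H
    using subgroup_imp_group[OF H(1)] .
  have M_H: "subgroup M ?H"
    using subgroup_incl[OF M(1) H(1)] M(2) by blast
  have "rcosets\<^bsub>?H\<^esub> M = (\<lambda>h. M #> h) ` H"
    unfolding RCOSETS_def by auto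
  then have index: "card ((\<lambda>h. M #> h) ` H) * card M = card H"
    using H.lagrange[OF M_H] by (simp add: order_def)
  then obtain i where i: "card ((\<lambda>h. M #> h) ` H) = p ^ i"
    using divides_primepow_nat[OF p] H(2) dvd_triv_left by metis
  have "finite H"
    using H(2) prime_gt_0_nat[OF p] card_gt_0_iff by force
  have "i \<noteq> 0"
  proof
    assume "i = 0"
    then have "card M = card H"
      using i index by simp
    then show False
      using psubset_card_mono[OF \<open>finite H\<close> M(2)] by simp
  qed
  then show ?thesis
    unfolding i by (simp add: dvd_power)
qed

lemma (in group) rcos_fixed_imp_conj_mem:
  assumes M: "subgroup M G" and h: "h \<in> carrier G" and m: "m \<in> M"
    and fixed: "M #> h #> m = M #> h"
  shows "h \<otimes> m \<otimes> inv h \<in> M"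
proof -
  have M_sub: "M \<subseteq> carrier G" and m_G: "m \<in> carrier G"
    using M m subgroup.subset by auto
  have "h \<otimes> m \<in> M #> h #> m"
    using coset_mult_assoc[OF M_sub h m_G] rcos_self[OF _ M, of "h \<otimes> m"] h m_G by simp
  then have "h \<otimes> m \<in> M #> h"
    by (simp only: fixed)
  then obtain x where x: "x \<in> M" "h \<otimes> m = x \<otimes> h"
    unfolding r_coset_def by blast
  then have "h \<otimes> m \<otimes> inv h = x \<otimes> h \<otimes> inv h"
    by simp
  also have "\<dots> = x"
    using x(1) M_sub h by (simp add: m_assoc subsetD)
  finally show ?thesis
    using x(1) by simp
qed

lemma prime_dvd_card_obtains_other:
  assumes "Factorial_Ring.prime p" and "p dvd card F" and "finite F" and "x \<in> F"
  obtains y where "y \<in> F" and "y \<noteq> x"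
proof -
  have "0 < card F"
    using assms(3,4) card_gt_0_iff by blast
  then have "card {x} < card F"
    using dvd_imp_le[OF assms(2)] prime_ge_2_nat[OF assms(1)] by simp
  have "\<not> F \<subseteq> {x}"
  proof
    assume "F \<subseteq> {x}"
    then have "card F \<le> card {x}"
      by (intro card_mono) simp_all
    with \<open>card {x} < card F\<close> show False
      by simp
  qed
  then show ?thesis
    using that by blast
qed

lemma (in group) p_dvd_card_fixed_rcosets:
  assumes p: "Factorial_Ring.prime p"
    and H: "subgroup H G" "card H = p ^ k" and M: "subgroup M G" "M \<subset> H"
  shows "p dvd card {S \<in> (\<lambda>h. M #> h) ` H. \<forall>l\<in>M. S #> inv l = S}"
proof -
  let ?M = "G\<lparr>carrier := M\<rparr>" and ?E = "(\<lambda>h. M #> h) ` H"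
  interpret action: group_action ?M ?E "\<lambda>l. \<lambda>S\<in>?E. S #> inv l"
    using rcosets_right_action[OF H(1) M(1)] M(2) by blast
  have "finite H"
    using H(2) prime_gt_0_nat[OF p] card_gt_0_iff by force
  have "subgroup M (G\<lparr>carrier := H\<rparr>)"
    using subgroup_incl[OF M(1) H(1)] M(2) by blast
  then obtain j where "card M = p ^ j"
    using group.card_subgroup_prime_power[OF subgroup_imp_group[OF H(1)] _ p] H(2)
    by (auto simp: order_def)
  then have "card (fixed_points ?M ?E (\<lambda>l. \<lambda>S\<in>?E. S #> inv l)) mod p = card ?E mod p"
    using action.card_fixed_points_mod[OF _ p] \<open>finite H\<close> by (simp add: order_def)
  moreover have "fixed_points ?M ?E (\<lambda>l. \<lambda>S\<in>?E. S #> inv l) = {S \<in> ?E. \<forall>l\<in>M. S #> inv l = S}"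
    unfolding fixed_points_def by auto
  ultimately show ?thesis
    using p_dvd_card_rcosets[OF p H M] by (simp add: mod_eq_0_iff_dvd)
qed

lemma (in group) p_subgroup_normalizer_grows:
  assumes p: "Factorial_Ring.prime p"
    and H: "subgroup H G" "card H = p ^ k" and M: "subgroup M G" "M \<subset> H"
  shows "\<exists>h\<in>H - M. \<forall>m\<in>M. h \<otimes> m \<otimes> inv h \<in> M"
proof -
  let ?F = "{S \<in> (\<lambda>h. M #> h) ` H. \<forall>l\<in>M. S #> inv l = S}"
  have "finite H"
    using H(2) prime_gt_0_nat[OF p] card_gt_0_iff by force
  then have "finite ?F"
    by simp
  moreover have "M \<in> ?F"
  proof -
    have "M = M #> \<one>" "\<one> \<in> H"
      using subgroup.subset[OF M(1)] subgroup.one_closed[OF H(1)] by simp_all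
    moreover have "M #> inv l = M" if "l \<in> M" for l
      using subgroup.rcos_const[OF M(1) is_group subgroup.m_inv_closed[OF M(1) that]] .
    ultimately show ?thesis
      by blast
  qed
  ultimately obtain S where "S \<in> ?F" "S \<noteq> M"
    using prime_dvd_card_obtains_other[OF p p_dvd_card_fixed_rcosets[OF p H M]] by blast
  then obtain h where h: "h \<in> H" "M #> h \<noteq> M" and h_fixed: "\<forall>l\<in>M. M #> h #> inv l = M #> h"
    by blast
  have "h \<notin> M"
    using h(2) subgroup.rcos_const[OF M(1) is_group] by blast
  moreover have "h \<otimes> m \<otimes> inv h \<in> M" if m: "m \<in> M" for m
  proof (rule rcos_fixed_imp_conj_mem[OF M(1) _ m])
    show "h \<in> carrier G"
      using h(1) H(1) subgroup.subset by blast
    show "M #> h #> m = M #> h"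
      using h_fixed subgroup.m_inv_closed[OF M(1) m] subgroup.mem_carrier[OF M(1) m] by force
  qed
  ultimately show ?thesis
    using h(1) by blast
qed

lemma (in group) normalizesI_finite:
  assumes "finite S" and "S \<subseteq> carrier G" and "g \<in> carrier G"
    and "\<And>s. s \<in> S \<Longrightarrow> g \<otimes> s \<otimes> inv g \<in> S"
  shows "normalizes G g S"
proof -
  have "inj_on (\<lambda>x. g \<otimes> x \<otimes> inv g) S"
    using assms(2,3) conjugation_is_inj unfolding inj_on_def by blast
  moreover have "(\<lambda>x. g \<otimes> x \<otimes> inv g) ` S \<subseteq> S"
    using assms(4) by blast
  ultimately show ?thesis
    unfolding normalizes_def using endo_inj_surj[OF assms(1)] by blast
qed

lemma (in group) normalizer_eq_normalizes:
  assumes "M \<subseteq> carrier G"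
  shows "normalizer G M = {g \<in> carrier G. normalizes G g M}"
proof -
  have "l_coset G g M #> inv g = (\<lambda>x. g \<otimes> x \<otimes> inv g) ` M" for g
    unfolding l_coset_def r_coset_def by auto
  then show ?thesis
    using assms unfolding normalizer_def stabilizer_def normalizes_def by auto
qed

lemma (in group) p_subgroup_proper_le_normal:
  assumes p: "Factorial_Ring.prime p"
    and H: "subgroup H G" "card H = p ^ k" and L: "subgroup L G" "L \<subset> H"
  shows "\<exists>M. subgroup M G \<and> L \<subseteq> M \<and> M \<subset> H \<and> (\<forall>g\<in>H. normalizes G g M)"
proof -
  have "finite H"
    using H(2) prime_gt_0_nat[OF p] card_gt_0_iff by force
  define S where "S = {M. subgroup M G \<and> L \<subseteq> M \<and> M \<subset> H}"
  have "S \<subseteq> Pow H"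
    unfolding S_def by auto
  then have "finite S"
    using \<open>finite H\<close> finite_subset by blast
  moreover have "L \<in> S"
    unfolding S_def using L by auto
  ultimately obtain M where "M \<in> S" "L \<subseteq> M" and M_max: "\<And>N. N \<in> S \<Longrightarrow> M \<subseteq> N \<Longrightarrow> M = N"
    using finite_has_maximal2 by metis
  then have M: "subgroup M G" "M \<subset> H"
    unfolding S_def by auto
  have M_sub: "M \<subseteq> carrier G" and fin_M: "finite M"
    using M subgroup.subset \<open>finite H\<close> finite_subset by blast+
  define N where "N = normalizer G M \<inter> H"
  have "subgroup N G"
    unfolding N_def using subgroups_Inter_pair normalizer_imp_subgroup[OF M_sub] H(1) by blast
  moreover have "M \<subseteq> N"
  proof
    fix m assume "m \<in> M"
    then have "normalizes G m M"
      using M(1) M_sub by (intro normalizesI_finite[OF fin_M]) (auto simp: subgroup.m_closed subgroup.m_inv_closed)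
    then show "m \<in> N"
      unfolding N_def normalizer_eq_normalizes[OF M_sub] using \<open>m \<in> M\<close> M M_sub by auto
  qed
  moreover obtain g where "g \<in> H - M" "\<And>m. m \<in> M \<Longrightarrow> g \<otimes> m \<otimes> inv g \<in> M"
    using p_subgroup_normalizer_grows[OF p H M] by blast
  then have "g \<in> N - M"
    unfolding N_def normalizer_eq_normalizes[OF M_sub]
    using normalizesI_finite[OF fin_M M_sub] H(1) subgroup.subset by blast
  ultimately have "N = H"
    using M_max[of N] \<open>L \<subseteq> M\<close> unfolding S_def N_def by blast
  then have "\<forall>g\<in>H. normalizes G g M"
    unfolding N_def normalizer_eq_normalizes[OF M_sub] by blast
  then show ?thesis
    using M \<open>L \<subseteq> M\<close> by blast
qed

lemma (in group) subgroup_centralizing: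
  assumes "T \<subseteq> carrier G"
  shows "subgroup {x \<in> carrier G. centralizes G x T} G"
proof (rule subgroupI)
  have "\<one> \<in> {x \<in> carrier G. centralizes G x T}"
    using assms unfolding centralizes_def by (auto simp: subset_iff)
  then show "{x \<in> carrier G. centralizes G x T} \<noteq> {}"
    by blast
  fix a b
  assume a: "a \<in> {x \<in> carrier G. centralizes G x T}" and b: "b \<in> {x \<in> carrier G. centralizes G x T}"
  then have a_G: "a \<in> carrier G" and b_G: "b \<in> carrier G" by auto
  have "inv a \<otimes> t = t \<otimes> inv a" if t: "t \<in> T" for t
  proof -
    have t_G: "t \<in> carrier G"
      using t assms by auto
    have "inv a \<otimes> t = inv a \<otimes> (t \<otimes> a) \<otimes> inv a"
      using a_G t_G by (simp add: m_assoc)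
    also have "\<dots> = inv a \<otimes> (a \<otimes> t) \<otimes> inv a"
      using a t unfolding centralizes_def by simp
    also have "\<dots> = t \<otimes> inv a"
      using a_G t_G by (simp add: m_assoc[symmetric])
    finally show ?thesis .
  qed
  then show "inv a \<in> {x \<in> carrier G. centralizes G x T}"
    using a_G unfolding centralizes_def by auto
  have "a \<otimes> b \<otimes> t = t \<otimes> (a \<otimes> b)" if t: "t \<in> T" for t
  proof -
    have t_G: "t \<in> carrier G"
      using t assms by auto
    have "a \<otimes> b \<otimes> t = a \<otimes> (t \<otimes> b)"
      using a_G b_G t_G b t unfolding centralizes_def by (simp add: m_assoc)
    also have "\<dots> = t \<otimes> (a \<otimes> b)"
      using a_G b_G t_G a t unfolding centralizes_def by (simp add: m_assoc[symmetric])
    finally show ?thesis .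
  qed
  then show "a \<otimes> b \<in> {x \<in> carrier G. centralizes G x T}"
    using a_G b_G unfolding centralizes_def by auto
qed auto

lemma (in group) generate_commute:
  assumes "S \<subseteq> carrier G" and "\<And>x y. x \<in> S \<Longrightarrow> y \<in> S \<Longrightarrow> x \<otimes> y = y \<otimes> x"
    and "x \<in> generate G S" and "y \<in> generate G S"
  shows "x \<otimes> y = y \<otimes> x"
proof -
  have "generate G S \<subseteq> {x \<in> carrier G. centralizes G x S}"
    using assms(1,2)
    by (intro generate_subgroup_incl[OF _ subgroup_centralizing]) (auto simp: centralizes_def)
  then have "generate G S \<subseteq> {x \<in> carrier G. centralizes G x (generate G S)}"
    using assms(1) generate_incl[OF assms(1)]
    by (intro generate_subgroup_incl[OF _ subgroup_centralizing]) (auto simp: centralizes_def)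
  then show ?thesis
    using assms(3,4) unfolding centralizes_def by blast
qed

lemma (in group) elem_abelian_subgroup_generate:
  assumes "S \<subseteq> carrier G" and comm: "\<And>x y. x \<in> S \<Longrightarrow> y \<in> S \<Longrightarrow> x \<otimes> y = y \<otimes> x"
    and exp: "\<And>x. x \<in> S \<Longrightarrow> x [^] p = \<one>"
  shows "elem_abelian_subgroup G p (generate G S)"
proof -
  have "x [^] p = \<one>" if "x \<in> generate G S" for x
    using that
  proof (induction rule: generate.induct)
    case (inv h)
    then show ?case
      using assms(1) exp by (auto simp: nat_pow_inv)
  next
    case (eng h1 h2)
    then show ?case
      using generate_commute[OF assms(1) comm] generate_in_carrier[OF assms(1)]
      by (simp add: pow_mult_distrib)
  qed (simp_all add: exp)
  then show ?thesis
    unfolding elem_abelian_subgroup_def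
    using generate_is_subgroup[OF assms(1)] generate_commute[OF assms(1) comm] by blast
qed

lemma (in group) normalizes_generate:
  assumes "S \<subseteq> carrier G" and "g \<in> carrier G" and "normalizes G g S"
  shows "normalizes G g (generate G S)"
proof -
  let ?c = "\<lambda>x. g \<otimes> x \<otimes> inv g"
  have "?c \<in> hom G G"
    using assms(2) by (intro homI) (simp_all add: inv_solve_left m_assoc)
  then interpret c: group_hom G G ?c
    by (simp add: group_hom_def group_hom_axioms_def is_group)
  show ?thesis
    using c.generate_img[OF assms(1)] assms(3) unfolding normalizes_def by simp
qed

lemma (in group) centralizes_inter_normal_subset:
  assumes fin: "finite (carrier G)" and A: "normal_subset G A"
    and exp: "\<And>a. a \<in> A \<Longrightarrow> a [^] p = \<one>"
    and hyp: "\<And>a E. \<lbrakk>a \<in> A; elem_abelian_subgroup G p E; normalizes G a E\<rbrakk> \<Longrightarrow> centralizes G a E"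
    and comm: "\<And>x y. x \<in> A \<inter> M \<Longrightarrow> y \<in> A \<inter> M \<Longrightarrow> x \<otimes> y = y \<otimes> x"
    and b: "b \<in> A" "normalizes G b M"
  shows "centralizes G b (A \<inter> M)"
proof -
  have A_sub: "A \<subseteq> carrier G" and b_G: "b \<in> carrier G"
    using A b(1) unfolding normal_subset_def by auto
  define E where "E = generate G (A \<inter> M)"
  have "elem_abelian_subgroup G p E"
    unfolding E_def using A_sub comm exp by (intro elem_abelian_subgroup_generate) auto
  moreover have "normalizes G b (A \<inter> M)"
  proof (rule normalizesI_finite)
    show "finite (A \<inter> M)"
      using A_sub fin finite_subset by blast
    show "b \<otimes> x \<otimes> inv b \<in> A \<inter> M" if x: "x \<in> A \<inter> M" for x
    proof
      show "b \<otimes> x \<otimes> inv b \<in> A"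
        using A b_G x unfolding normal_subset_def by blast
      have "b \<otimes> x \<otimes> inv b \<in> (\<lambda>x. b \<otimes> x \<otimes> inv b) ` M"
        using x by blast
      then show "b \<otimes> x \<otimes> inv b \<in> M"
        using b(2) unfolding normalizes_def by simp
    qed
  qed (use A_sub b_G in auto)
  then have "normalizes G b E"
    unfolding E_def using A_sub b_G by (intro normalizes_generate) auto
  ultimately have "centralizes G b E"
    using hyp b(1) by blast
  moreover have "A \<inter> M \<subseteq> E"
    unfolding E_def by (auto intro: generate.incl)
  ultimately show ?thesis
    unfolding centralizes_def by blast
qed

lemma (in group) p_group_normal_subset_commute:
  assumes ord: "order G = p ^ n" and p: "Factorial_Ring.prime p"
    and A: "normal_subset G A" and exp: "\<And>a. a \<in> A \<Longrightarrow> a [^] p = \<one>"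
    and hyp: "\<And>a E. \<lbrakk>a \<in> A; elem_abelian_subgroup G p E; normalizes G a E\<rbrakk> \<Longrightarrow> centralizes G a E"
    and "subgroup H G" and "a \<in> A \<inter> H" and "b \<in> A \<inter> H"
  shows "a \<otimes> b = b \<otimes> a"
  using assms(6-8)
proof (induction "card H" arbitrary: H a b rule: less_induct)
  case (less H a b)
  have fin: "finite (carrier G)"
    using ord prime_gt_0_nat[OF p] card_gt_0_iff unfolding order_def by force
  have A_sub: "A \<subseteq> carrier G"
    using A unfolding normal_subset_def by auto
  have a_G: "a \<in> carrier G"
    using less.prems(2) A_sub by auto
  obtain k where card_H: "card H = p ^ k"
    using card_subgroup_prime_power[OF ord p less.prems(1)] by blast
  define L where "L = generate G {a}"
  have L: "subgroup L G" "L \<subseteq> H" "a \<in> L"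
    unfolding L_def using a_G generate_subgroup_incl[OF _ less.prems(1), of "{a}"] less.prems(2)
    by (auto intro: generate_is_subgroup generate.incl)
  show ?case
  proof (cases "L = H")
    case True
    then show ?thesis
      using generate_commute[of "{a}"] a_G L(3) less.prems(3) unfolding L_def by blast
  next
    case False
    then obtain M where M: "subgroup M G" "L \<subseteq> M" "M \<subset> H" and M_normal: "\<forall>g\<in>H. normalizes G g M"
      using p_subgroup_proper_le_normal[OF p less.prems(1) card_H L(1)] L(2) by blast
    have card_M: "card M < card H"
      using psubset_card_mono[OF finite_subset[OF subgroup.subset[OF less.prems(1)] fin] M(3)] .
    have "centralizes G b (A \<inter> M)"
      using centralizes_inter_normal_subset[OF fin A exp hyp less.hyps[OF card_M M(1)]]
        less.prems(3) M_normal by blast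
    moreover have "a \<in> A \<inter> M"
      using less.prems(2) L(3) M(2) by blast
    ultimately show ?thesis
      unfolding centralizes_def by simp
  qed
qed

theorem lemma2p4:
  fixes G (structure) and p :: nat and A :: "'a set"
  assumes "Factorial_Ring.prime p"
    and "p_group G p"
    and "normal_subset G A"
    and "A \<noteq> {}"
    and "\<forall>a\<in>A. group.ord G a = p"
    and "\<forall>a\<in>A. \<forall>E. elem_abelian_subgroup G p E \<and> normalizes G a E \<longrightarrow> centralizes G a E"
  shows "elem_abelian_subgroup G p (generate G A) \<and> generate G A \<lhd> G"
proof -
  interpret group G
    using assms(2) unfolding p_group_def by blast
  obtain n where ord: "order G = p ^ n"
    using assms(2) unfolding p_group_def by blast
  have A_sub: "A \<subseteq> carrier G"
    using assms(3) unfolding normal_subset_def by blast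
  have exp: "a [^] p = \<one>" if "a \<in> A" for a
    using pow_ord_eq_1[of a] that assms(5) A_sub by auto
  have hyp: "centralizes G a E"
    if "a \<in> A" "elem_abelian_subgroup G p E" "normalizes G a E" for a E
    using assms(6) that by blast
  have "a \<otimes> b = b \<otimes> a" if "a \<in> A" "b \<in> A" for a b
    using p_group_normal_subset_commute[OF ord assms(1,3) exp hyp subgroup_self] that A_sub
    by auto
  then have "elem_abelian_subgroup G p (generate G A)"
    using A_sub exp by (intro elem_abelian_subgroup_generate)
  moreover have "generate G A \<lhd> G"
    using A_sub assms(3) unfolding normal_subset_def by (intro normal_generateI) auto
  ultimately show ?thesis ..
qed

end
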